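(* Let $S$ be a finite nonempty set of positive integers and $s=\max S$. The minimum density of a $1$-identifying code in the distance graph $G(S)$ is achieved by a periodic set with period at most $(6s)2^{6s}$.
   Context: The distance graph $G(S)$ has vertex set $\mathbb{Z}$, with $i,j$ adjacent iff $|i-j|\in S$. For a vertex $u$, $B_r(u)$ is the set of vertices at graph distance at most $r$ from $u$ in $G(S)$. A set $A\subseteq\mathbb{Z}$ is an $r$-identifying code if for every pair of distinct vertices $u,v$, the sets $A\cap B_r(u)$ and $A\cap B_r(v)$ are nonempty and distinct. The density of $A$ is $\delta(A)=\limsup_{N\to\infty}\frac{|A\cap[-N,N]|}{2N+1}$. A set $A$ is periodic with period $p$ if $A+p=A$. *)

theory Defs
  imports "HOL-Analysis.Analysis"
begin

text \<open>Closed ball of radius 1 around u in the distance graph G(S) on the integers: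
  vertices at graph distance at most 1 from u, i.e. u itself and its neighbours.\<close>
definition ball1 :: "int set \<Rightarrow> int \<Rightarrow> int set" where
  "ball1 S u = {v. v = u \<or> \<bar>u - v\<bar> \<in> S}"

definition identifying_code1 :: "int set \<Rightarrow> int set \<Rightarrow> bool" where
  "identifying_code1 S A \<longleftrightarrow>
     (\<forall>u v. u \<noteq> v \<longrightarrow>
        A \<inter> ball1 S u \<noteq> {} \<and> A \<inter> ball1 S v \<noteq> {} \<and>
        A \<inter> ball1 S u \<noteq> A \<inter> ball1 S v)"

definition density :: "int set \<Rightarrow> ereal" where
  "density A = limsup (\<lambda>N::nat. ereal (real (card (A \<inter> {- int N .. int N})) / (2 * real N + 1)))"

definition periodic_with :: "int set \<Rightarrow> int \<Rightarrow> bool" where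
  "periodic_with A p \<longleftrightarrow> (\<lambda>x. x + p) ` A = A"

end

theory Submission
  imports Defs "HOL-Real_Asymp.Real_Asymp"
begin

text \<open>Let s = Max S and w = 4 s + 1. Whether A is a 1-identifying code only depends on the
  windows of width w occurring in A: the balls around two vertices at distance at most 2 s lie
  in one such window, and farther apart the balls are disjoint. Among 2^w + 1 consecutive
  windows of a code B two coincide, at i and i + p with 0 < p \<le> 2^w; then the periodic
  extension of the block of B on [i, i + p) and B with this block excised only contain windows
  of B, so both are codes. Induction on n shows that every interval of length n contains at
  least \<mu> (n - 2^w) elements of B, where \<mu> is the least density of a code of period at most
  2^w. Hence a periodic code attaining \<mu> is optimal, and 2^w \<le> 6 s 2^(6 s).\<close>

lemma Max_pos:
  fixes S :: "'a::linordered_idom set"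
  assumes "finite S" "S \<noteq> {}" "\<forall>x\<in>S. x > 0"
  shows "Max S > 0"
  using assms Max_in by blast

lemma abs_diff_le_Max_if_mem_ball1:
  assumes "finite S" "S \<noteq> {}" "\<forall>x\<in>S. x > 0" "v \<in> ball1 S u"
  shows "\<bar>u - v\<bar> \<le> Max S"
proof (cases "v = u")
  case True
  then show ?thesis using Max_pos[OF assms(1-3)] by simp
next
  case False
  then have "\<bar>u - v\<bar> \<in> S" using assms(4) by (simp add: ball1_def)
  then show ?thesis using assms(1) by (rule Max_ge[rotated])
qed

definition window :: "int \<Rightarrow> int set \<Rightarrow> int \<Rightarrow> int set" where
  "window w B z = {d. 0 \<le> d \<and> d < w \<and> z + d \<in> B}"

definition windows_in :: "int \<Rightarrow> int set \<Rightarrow> int set \<Rightarrow> bool" where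
  "windows_in w A B \<longleftrightarrow> (\<forall>x. \<exists>y. window w A x = window w B y)"

lemma window_eqD:
  "window w B i = window w C j \<Longrightarrow> 0 \<le> d \<Longrightarrow> d < w \<Longrightarrow> i + d \<in> B \<longleftrightarrow> j + d \<in> C"
  unfolding window_def by blast

lemma ball1_inter_eq_translate_if_window_eq:
  assumes "finite S" "S \<noteq> {}" "\<forall>x\<in>S. x > 0"
    and win: "window (4 * Max S + 1) A x = window (4 * Max S + 1) B y"
    and "0 \<le> c" "c \<le> 2 * Max S"
  shows "A \<inter> ball1 S (x + Max S + c) = (\<lambda>b. b + (x - y)) ` (B \<inter> ball1 S (y + Max S + c))"
proof -
  have mem: "a \<in> A \<inter> ball1 S (x + Max S + c) \<longleftrightarrow> a - (x - y) \<in> B \<inter> ball1 S (y + Max S + c)" for a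
  proof -
    have ball: "a \<in> ball1 S (x + Max S + c) \<longleftrightarrow> a - (x - y) \<in> ball1 S (y + Max S + c)"
      by (simp add: ball1_def algebra_simps)
    have "a \<in> A \<longleftrightarrow> a - (x - y) \<in> B" if "a \<in> ball1 S (x + Max S + c)"
    proof -
      have "\<bar>x + Max S + c - a\<bar> \<le> Max S"
        using abs_diff_le_Max_if_mem_ball1 assms(1-3) that by blast
      then have "0 \<le> a - x" "a - x < 4 * Max S + 1"
        using assms(5,6) by auto
      then have "x + (a - x) \<in> A \<longleftrightarrow> y + (a - x) \<in> B"
        using window_eqD[OF win] by blast
      then show ?thesis by (simp add: algebra_simps)
    qed
    with ball show ?thesis by blast
  qed
  show ?thesis
    by (rule set_eqI) (metis (no_types, lifting) mem diff_add_cancel image_iff add_diff_cancel)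
qed

lemma identifying_code1_if_windows_in:
  assumes fin: "finite S" and ne: "S \<noteq> {}" and pos: "\<forall>x\<in>S. x > 0"
    and B: "identifying_code1 S B" and win: "windows_in (4 * Max S + 1) A B"
  shows "identifying_code1 S A"
proof -
  let ?s = "Max S"
  have translate: "\<exists>y. \<forall>c. 0 \<le> c \<and> c \<le> 2 * ?s \<longrightarrow>
      A \<inter> ball1 S (u + c) = (\<lambda>b. b + (u - ?s - y)) ` (B \<inter> ball1 S (y + ?s + c))" for u
  proof -
    obtain y where "window (4 * ?s + 1) A (u - ?s) = window (4 * ?s + 1) B y"
      using win unfolding windows_in_def by blast
    then have "A \<inter> ball1 S (u - ?s + ?s + c) = (\<lambda>b. b + (u - ?s - y)) ` (B \<inter> ball1 S (y + ?s + c))"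
      if "0 \<le> c" "c \<le> 2 * ?s" for c
      using ball1_inter_eq_translate_if_window_eq[OF fin ne pos] that by blast
    then show ?thesis by (intro exI[of _ y]) simp
  qed
  have nonempty: "A \<inter> ball1 S u \<noteq> {}" for u
  proof -
    obtain y where "A \<inter> ball1 S (u + 0) = (\<lambda>b. b + (u - ?s - y)) ` (B \<inter> ball1 S (y + ?s + 0))"
      using translate[of u] Max_pos[OF fin ne pos] by force
    moreover have "B \<inter> ball1 S (y + ?s + 0) \<noteq> {}"
      using B unfolding identifying_code1_def by (metis add.right_neutral zero_neq_one)
    ultimately show ?thesis by simp
  qed
  have separates: "A \<inter> ball1 S u \<noteq> A \<inter> ball1 S v" if "u < v" for u v
  proof (cases "v - u \<le> 2 * ?s")
    case True
    obtain y where y: "\<forall>c. 0 \<le> c \<and> c \<le> 2 * ?s \<longrightarrow>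
        A \<inter> ball1 S (u + c) = (\<lambda>b. b + (u - ?s - y)) ` (B \<inter> ball1 S (y + ?s + c))"
      using translate by blast
    have inj: "inj (\<lambda>b::int. b + (u - ?s - y))" by (simp add: inj_on_def)
    have "B \<inter> ball1 S (y + ?s + 0) \<noteq> B \<inter> ball1 S (y + ?s + (v - u))"
      using B that unfolding identifying_code1_def by auto
    then show ?thesis
      using y[rule_format, of 0] y[rule_format, of "v - u"] True that
      by (auto simp: inj_image_eq_iff[OF inj])
  next
    case False
    obtain a where a: "a \<in> A" "a \<in> ball1 S u" using nonempty by blast
    have "a \<notin> ball1 S v"
      using abs_diff_le_Max_if_mem_ball1[OF fin ne pos a(2)]
        abs_diff_le_Max_if_mem_ball1[OF fin ne pos, of a v] False by auto
    with a show ?thesis by blast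
  qed
  show ?thesis
    unfolding identifying_code1_def using nonempty separates by (metis linorder_neqE)
qed

definition periodic_set :: "int \<Rightarrow> int set \<Rightarrow> int set" where
  "periodic_set p T = {z. z mod p \<in> T}"

definition block :: "int set \<Rightarrow> int \<Rightarrow> int \<Rightarrow> int set" where
  "block B i p = {t. 0 \<le> t \<and> t < p \<and> i + t \<in> B}"

definition excise_block :: "int set \<Rightarrow> int \<Rightarrow> int \<Rightarrow> int set" where
  "excise_block B i p = {z. (z < i \<and> z \<in> B) \<or> (i \<le> z \<and> z + p \<in> B)}"

definition count_ivl :: "int set \<Rightarrow> int \<Rightarrow> int \<Rightarrow> nat" where
  "count_ivl B a b = card (B \<inter> {a..<b})"

lemma periodic_with_periodic_set: "periodic_with (periodic_set p T) p"
  unfolding periodic_with_def periodic_set_def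
proof (intro set_eqI iffI)
  fix z assume "z \<in> {z. z mod p \<in> T}"
  moreover have "(z - p) mod p = z mod p" by (metis diff_add_cancel mod_add_self2)
  ultimately show "z \<in> (\<lambda>x. x + p) ` {z. z mod p \<in> T}"
    by (intro image_eqI[of _ _ "z - p"]) auto
qed auto

lemma mem_iff_mem_mod_if_window_repeats:
  assumes rep: "window w B i = window w B (i + p)" and p: "0 < p"
    and "0 \<le> t" "t < p + w"
  shows "i + t \<in> B \<longleftrightarrow> i + t mod p \<in> B"
  using assms(3,4)
proof (induction "nat t" arbitrary: t rule: less_induct)
  case less
  show ?case
  proof (cases "t < p")
    case True
    then show ?thesis using less.prems by simp
  next
    case False
    have "i + t \<in> B \<longleftrightarrow> (i + p) + (t - p) \<in> B" by simp
    also have "\<dots> \<longleftrightarrow> i + (t - p) \<in> B"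
      using window_eqD[OF rep, of "t - p"] False less.prems by auto
    also have "\<dots> \<longleftrightarrow> i + (t - p) mod p \<in> B"
      using less.hyps[of "t - p"] False less.prems p by auto
    also have "(t - p) mod p = t mod p" by (metis diff_add_cancel mod_add_self2)
    finally show ?thesis .
  qed
qed

lemma windows_in_periodic_block:
  assumes rep: "window w B i = window w B (i + p)" and p: "0 < p"
  shows "windows_in w (periodic_set p (block B i p)) B"
  unfolding windows_in_def
proof
  fix x
  have "x + d \<in> periodic_set p (block B i p) \<longleftrightarrow> (i + x mod p) + d \<in> B"
    if "0 \<le> d" "d < w" for d
  proof -
    have "x + d \<in> periodic_set p (block B i p) \<longleftrightarrow> i + (x mod p + d) mod p \<in> B"
      using p by (simp add: periodic_set_def block_def mod_add_left_eq)
    also have "\<dots> \<longleftrightarrow> i + (x mod p + d) \<in> B"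
      using mem_iff_mem_mod_if_window_repeats[OF rep p, of "x mod p + d"] that
        pos_mod_bound[OF p, of x] pos_mod_sign[OF p, of x] by simp
    finally show ?thesis by (simp add: add.assoc)
  qed
  then show "\<exists>y. window w (periodic_set p (block B i p)) x = window w B y"
    by (intro exI[of _ "i + x mod p"]) (auto simp: window_def)
qed

lemma windows_in_excise_block:
  assumes rep: "window w B i = window w B (i + p)"
  shows "windows_in w (excise_block B i p) B"
  unfolding windows_in_def
proof
  fix x
  show "\<exists>y. window w (excise_block B i p) x = window w B y"
  proof (cases "x < i")
    case True
    have "x + d \<in> excise_block B i p \<longleftrightarrow> x + d \<in> B" if "0 \<le> d" "d < w" for d
    proof (cases "x + d < i")
      case False
      then have "x + d \<in> excise_block B i p \<longleftrightarrow> (i + p) + (x + d - i) \<in> B"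
        by (simp add: excise_block_def algebra_simps)
      also have "\<dots> \<longleftrightarrow> i + (x + d - i) \<in> B"
        using window_eqD[OF rep, of "x + d - i"] False that True by auto
      finally show ?thesis by simp
    qed (simp add: excise_block_def)
    then show ?thesis by (intro exI[of _ x]) (auto simp: window_def)
  next
    case False
    then show ?thesis
      by (intro exI[of _ "x + p"]) (auto simp: window_def excise_block_def algebra_simps)
  qed
qed

lemma count_ivl_split: "a \<le> m \<Longrightarrow> m \<le> b \<Longrightarrow> count_ivl B a b = count_ivl B a m + count_ivl B m b"
  unfolding count_ivl_def
  by (subst card_Un_disjoint[symmetric]) (auto intro: arg_cong[where f = card])

lemma count_ivl_mono: "b \<le> c \<Longrightarrow> count_ivl B a b \<le> count_ivl B a c"
  unfolding count_ivl_def by (intro card_mono) auto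

lemma card_block: "card (block B i p) = count_ivl B i (i + p)"
proof -
  have "B \<inter> {i..<i + p} = (\<lambda>t. i + t) ` block B i p"
    by (auto simp: block_def image_iff intro!: exI[of _ "_ - i"])
  then show ?thesis unfolding count_ivl_def by (simp add: card_image)
qed

lemma count_ivl_excise_block:
  assumes "x \<le> i" "0 \<le> p" "i + p \<le> x + n"
  shows "count_ivl B x (x + n) = count_ivl (excise_block B i p) x (x + n - p) + count_ivl B i (i + p)"
proof -
  have "count_ivl B x (x + n) = count_ivl B x i + count_ivl B i (i + p) + count_ivl B (i + p) (x + n)"
    using assms count_ivl_split[of x i "x + n" B] count_ivl_split[of i "i + p" "x + n" B] by simp
  moreover have "count_ivl (excise_block B i p) x (x + n - p) =
      count_ivl (excise_block B i p) x i + count_ivl (excise_block B i p) i (x + n - p)"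
    using assms by (intro count_ivl_split) auto
  moreover have "count_ivl (excise_block B i p) x i = count_ivl B x i"
    unfolding count_ivl_def by (rule arg_cong[where f = card]) (auto simp: excise_block_def)
  moreover have "count_ivl (excise_block B i p) i (x + n - p) = count_ivl B (i + p) (x + n)"
  proof -
    have "B \<inter> {i + p..<x + n} = (\<lambda>z. z + p) ` (excise_block B i p \<inter> {i..<x + n - p})"
    proof (intro set_eqI iffI)
      fix z assume "z \<in> B \<inter> {i + p..<x + n}"
      then show "z \<in> (\<lambda>z. z + p) ` (excise_block B i p \<inter> {i..<x + n - p})"
        by (intro image_eqI[of _ _ "z - p"]) (auto simp: excise_block_def)
    qed (auto simp: excise_block_def)
    then show ?thesis unfolding count_ivl_def by (simp add: card_image)
  qed
  ultimately show ?thesis by simp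
qed

lemma count_ivl_periodic_set_period:
  assumes p: "0 < p" and T: "T \<subseteq> {0..<p}"
  shows "count_ivl (periodic_set p T) x (x + p) = card T"
proof -
  have "inj_on (\<lambda>z. z mod p) {x..<x + p}"
  proof
    fix a b assume ab: "a \<in> {x..<x + p}" "b \<in> {x..<x + p}" "a mod p = b mod p"
    then obtain k where k: "a - b = p * k"
      by (metis dvd_def mod_eq_dvd_iff)
    have "\<bar>p * k\<bar> < p * 1" using ab k by auto
    then have "k = 0" using p by (simp add: abs_mult)
    then show "a = b" using k by simp
  qed
  then have inj: "inj_on (\<lambda>z. z mod p) (periodic_set p T \<inter> {x..<x + p})"
    by (rule inj_on_subset) auto
  have "(\<lambda>z. z mod p) ` (periodic_set p T \<inter> {x..<x + p}) = T"
  proof (intro set_eqI iffI)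
    fix t assume t: "t \<in> T"
    define z where "z = x + (t - x) mod p"
    have "z mod p = t"
      using t T unfolding z_def by (auto simp: mod_add_right_eq)
    moreover have "x \<le> z" "z < x + p"
      using pos_mod_bound[OF p, of "t - x"] pos_mod_sign[OF p, of "t - x"] unfolding z_def by linarith+
    ultimately show "t \<in> (\<lambda>z. z mod p) ` (periodic_set p T \<inter> {x..<x + p})"
      using t by (auto simp: periodic_set_def image_iff intro!: bexI[of _ z])
  qed (auto simp: periodic_set_def)
  then show ?thesis unfolding count_ivl_def using card_image[OF inj] by simp
qed

lemma count_ivl_periodic_set_le:
  assumes p: "0 < p" and T: "T \<subseteq> {0..<p}"
  shows "real (count_ivl (periodic_set p T) x (x + int n)) \<le> card T / real_of_int p * n + card T"
proof (induction n arbitrary: x rule: less_induct)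
  case (less n)
  let ?A = "periodic_set p T"
  show ?case
  proof (cases "int n < p")
    case True
    then have "count_ivl ?A x (x + int n) \<le> card T"
      using count_ivl_mono[of "x + int n" "x + p" ?A x] count_ivl_periodic_set_period[OF p T] by simp
    then show ?thesis using p by (simp add: add_increasing)
  next
    case False
    define m where "m = n - nat p"
    have m: "int n = p + int m" "m < n" using False p by (auto simp: m_def)
    have "count_ivl ?A x (x + int n) = count_ivl ?A x (x + p) + count_ivl ?A (x + p) (x + p + int m)"
      using count_ivl_split[of x "x + p" "x + int n" ?A] m p by (simp add: add.assoc)
    also have "\<dots> = card T + count_ivl ?A (x + p) (x + p + int m)"
      using count_ivl_periodic_set_period[OF p T] by simp
    finally have "real (count_ivl ?A x (x + int n)) \<le> card T + (card T / real_of_int p * m + card T)"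
      using less.IH[OF m(2), of "x + p"] by simp
    also have "\<dots> = card T / real_of_int p * n + card T"
    proof -
      have "real n = of_int p + real m" using arg_cong[OF m(1), of real_of_int] by simp
      then show ?thesis using p by (simp add: field_simps)
    qed
    finally show ?thesis .
  qed
qed

lemma window_repeats:
  assumes "0 \<le> w"
  obtains a b :: nat where "a < b" "b \<le> 2 ^ nat w" "window w B (x + int a) = window w B (x + int b)"
proof -
  let ?f = "\<lambda>t::nat. window w B (x + int t)"
  have "\<not> inj_on ?f {0..2 ^ nat w}"
  proof
    assume "inj_on ?f {0..2 ^ nat w}"
    moreover have "?f ` {0..2 ^ nat w} \<subseteq> Pow {0..<w}" by (auto simp: window_def)
    ultimately have "card {0..2 ^ nat w :: nat} \<le> card (Pow {0..<w})"
      by (intro card_inj_on_le) auto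
    then show False using assms by (simp add: card_Pow)
  qed
  then show ?thesis
    unfolding inj_on_def by (metis atLeastAtMost_iff linorder_neqE_nat that)
qed

lemma count_ivl_lower_bound:
  fixes \<mu> :: real and K :: nat
  assumes fin: "finite S" and ne: "S \<noteq> {}" and pos: "\<forall>x\<in>S. x > 0"
    and K: "2 ^ nat (4 * Max S + 1) \<le> K"
    and periodic_bound: "\<And>p T. 1 \<le> p \<Longrightarrow> p \<le> int K \<Longrightarrow> T \<subseteq> {0..<p} \<Longrightarrow>
        identifying_code1 S (periodic_set p T) \<Longrightarrow> \<mu> \<le> card T / real_of_int p"
    and "0 \<le> \<mu>" and "identifying_code1 S B"
  shows "\<mu> * (real n - K) \<le> count_ivl B x (x + int n)"
  using assms(7)
proof (induction n arbitrary: B rule: less_induct)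
  case (less n)
  let ?w = "4 * Max S + 1"
  show ?case
  proof (cases "n \<le> K")
    case True
    then have "\<mu> * (real n - K) \<le> 0" using \<open>0 \<le> \<mu>\<close> by (simp add: mult_nonneg_nonpos)
    then show ?thesis by (meson of_nat_0_le_iff order_trans)
  next
    case False
    obtain a b where ab: "a < b" "b \<le> 2 ^ nat ?w" and
        rep: "window ?w B (x + int a) = window ?w B (x + int a + (int b - int a))"
      using window_repeats[of ?w B x] Max_pos[OF fin ne pos] by auto
    define i p where "i = x + int a" and "p = int b - int a"
    have p: "0 < p" "p \<le> int K" using ab K by (auto simp: p_def)
    have "identifying_code1 S (periodic_set p (block B i p))"
      using identifying_code1_if_windows_in[OF fin ne pos less.prems]
        windows_in_periodic_block rep p unfolding i_def p_def by blast
    moreover have "block B i p \<subseteq> {0..<p}" by (auto simp: block_def)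
    ultimately have "\<mu> \<le> card (block B i p) / real_of_int p" using periodic_bound p by simp
    then have block_bound: "\<mu> * p \<le> count_ivl B i (i + p)"
      using p by (simp add: card_block pos_le_divide_eq)
    define m where "m = n - nat p"
    have m: "m < n" "int n = int m + p" using p False by (auto simp: m_def)
    have "identifying_code1 S (excise_block B i p)"
      using identifying_code1_if_windows_in[OF fin ne pos less.prems]
        windows_in_excise_block rep unfolding i_def p_def by blast
    then have rest_bound: "\<mu> * (real m - K) \<le> count_ivl (excise_block B i p) x (x + int m)"
      by (rule less.IH[OF m(1)])
    have "x \<le> i" "i + p \<le> x + int n" using ab K False by (auto simp: i_def p_def)
    then have "count_ivl B x (x + int n) =
        count_ivl (excise_block B i p) x (x + int n - p) + count_ivl B i (i + p)"
      using p(1) by (intro count_ivl_excise_block) auto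
    also have "x + int n - p = x + int m" using m(2) by simp
    finally have "count_ivl B x (x + int n) =
        count_ivl (excise_block B i p) x (x + int m) + count_ivl B i (i + p)" .
    moreover have "real n = real m + p" using arg_cong[OF m(2), of real_of_int] by simp
    ultimately show ?thesis using block_bound rest_bound by (simp add: algebra_simps)
  qed
qed

lemma identifying_code1_UNIV:
  assumes fin: "finite S" and ne: "S \<noteq> {}" and pos: "\<forall>x\<in>S. x > 0"
  shows "identifying_code1 S UNIV"
proof -
  have "ball1 S u \<noteq> ball1 S v" if "u < v" for u v
  proof
    assume "ball1 S u = ball1 S v"
    moreover have "\<bar>v - (v + Max S)\<bar> = Max S" using Max_pos[OF fin ne pos] by arith
    then have "v + Max S \<in> ball1 S v" using Max_in[OF fin ne] unfolding ball1_def by auto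
    ultimately have "\<bar>u - (v + Max S)\<bar> \<le> Max S"
      using abs_diff_le_Max_if_mem_ball1[OF fin ne pos] by blast
    then show False using that Max_pos[OF fin ne pos] by simp
  qed
  moreover have "ball1 S u \<noteq> {}" for u by (auto simp: ball1_def)
  ultimately show ?thesis unfolding identifying_code1_def by (metis inf_top_left linorder_neqE)
qed

lemma exists_min_density_periodic_code:
  assumes "finite S" "S \<noteq> {}" "\<forall>x\<in>S. x > 0" and "1 \<le> K"
  obtains p T where "1 \<le> p" "p \<le> K" "T \<subseteq> {0..<p}" "identifying_code1 S (periodic_set p T)"
    "\<And>q U. 1 \<le> q \<Longrightarrow> q \<le> K \<Longrightarrow> U \<subseteq> {0..<q} \<Longrightarrow> identifying_code1 S (periodic_set q U) \<Longrightarrow>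
       card T / real_of_int p \<le> card U / real_of_int q"
proof -
  define P where "P = {(p, T). 1 \<le> p \<and> p \<le> K \<and> T \<subseteq> {0..<p} \<and> identifying_code1 S (periodic_set p T)}"
  have "finite P"
    by (rule finite_subset[of _ "{1..K} \<times> Pow {0..<K}"]) (auto simp: P_def)
  moreover have "periodic_set 1 {0} = UNIV" by (simp add: periodic_set_def)
  then have "(1, {0}) \<in> P" using identifying_code1_UNIV[OF assms(1-3)] \<open>1 \<le> K\<close> by (simp add: P_def)
  ultimately obtain pT where min: "is_arg_min (\<lambda>(p, T). card T / real_of_int p) (\<lambda>pT. pT \<in> P) pT"
    using ex_is_arg_min_if_finite by blast
  obtain p T where "pT = (p, T)" by fastforce
  with min show ?thesis
    by (intro that[of p T]) (auto simp: is_arg_min_def P_def not_less)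
qed

lemma density_ge_if_counts_ge:
  fixes \<mu> c :: real
  assumes "\<And>x n. \<mu> * real n - c \<le> count_ivl B x (x + int n)"
  shows "ereal \<mu> \<le> density B"
proof -
  have "\<mu> - c / (2 * real N + 1) \<le> card (B \<inter> {- int N .. int N}) / (2 * real N + 1)" for N
  proof -
    have "B \<inter> {- int N .. int N} = B \<inter> {- int N..<- int N + int (2 * N + 1)}" by auto
    then have "\<mu> * (2 * real N + 1) - c \<le> card (B \<inter> {- int N .. int N})"
      using assms[of "2 * N + 1" "- int N"] by (simp add: count_ivl_def algebra_simps)
    then show ?thesis by (simp add: pos_le_divide_eq left_diff_distrib)
  qed
  then have "limsup (\<lambda>N. ereal (\<mu> - c / (2 * real N + 1))) \<le> density B"
    unfolding density_def by (intro Limsup_mono) auto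
  moreover have "(\<lambda>N. \<mu> - c / (2 * real N + 1)) \<longlonglongrightarrow> \<mu>" by real_asymp
  then have "limsup (\<lambda>N. ereal (\<mu> - c / (2 * real N + 1))) = ereal \<mu>"
    by (intro lim_imp_Limsup) (simp_all add: lim_ereal)
  ultimately show ?thesis by simp
qed

lemma density_le_if_counts_le:
  fixes \<mu> c :: real
  assumes "\<And>x n. count_ivl A x (x + int n) \<le> \<mu> * real n + c"
  shows "density A \<le> ereal \<mu>"
proof -
  have "card (A \<inter> {- int N .. int N}) / (2 * real N + 1) \<le> \<mu> + c / (2 * real N + 1)" for N
  proof -
    have "A \<inter> {- int N .. int N} = A \<inter> {- int N..<- int N + int (2 * N + 1)}" by auto
    then have "card (A \<inter> {- int N .. int N}) \<le> \<mu> * (2 * real N + 1) + c"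
      using assms[of "- int N" "2 * N + 1"] by (simp add: count_ivl_def algebra_simps)
    then show ?thesis by (simp add: pos_divide_le_eq distrib_right)
  qed
  then have "density A \<le> limsup (\<lambda>N. ereal (\<mu> + c / (2 * real N + 1)))"
    unfolding density_def by (intro Limsup_mono) auto
  moreover have "(\<lambda>N. \<mu> + c / (2 * real N + 1)) \<longlonglongrightarrow> \<mu>" by real_asymp
  then have "limsup (\<lambda>N. ereal (\<mu> + c / (2 * real N + 1))) = ereal \<mu>"
    by (intro lim_imp_Limsup) (simp_all add: lim_ereal)
  ultimately show ?thesis by simp
qed

theorem theorem5:
  fixes S :: "int set"
  assumes "finite S" and "S \<noteq> {}" and "\<forall>x\<in>S. x > 0"
  shows "\<exists>A p. identifying_code1 S A \<and> 0 < p \<and> p \<le> (6 * Max S) * 2 ^ nat (6 * Max S)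
           \<and> periodic_with A p
           \<and> (\<forall>B. identifying_code1 S B \<longrightarrow> density A \<le> density B)"
proof -
  define K :: nat where "K = 2 ^ nat (4 * Max S + 1)"
  obtain p T where p: "1 \<le> p" "p \<le> int K" and T: "T \<subseteq> {0..<p}"
      and code: "identifying_code1 S (periodic_set p T)"
      and min: "\<And>q U. 1 \<le> q \<Longrightarrow> q \<le> int K \<Longrightarrow> U \<subseteq> {0..<q} \<Longrightarrow>
        identifying_code1 S (periodic_set q U) \<Longrightarrow> card T / real_of_int p \<le> card U / real_of_int q"
    using exists_min_density_periodic_code[OF assms, of "int K"] by (auto simp: K_def)
  let ?\<mu> = "card T / real_of_int p"
  have "density (periodic_set p T) \<le> ereal ?\<mu>"
    using count_ivl_periodic_set_le[OF _ T] p by (intro density_le_if_counts_le) auto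
  moreover have "ereal ?\<mu> \<le> density B" if "identifying_code1 S B" for B
    using count_ivl_lower_bound[OF assms _ min _ that, of K] p
    by (intro density_ge_if_counts_ge[of _ "?\<mu> * K"]) (auto simp: K_def algebra_simps)
  moreover have "p \<le> (6 * Max S) * 2 ^ nat (6 * Max S)"
  proof -
    have "Max S \<ge> 1" using Max_pos[OF assms] by simp
    then have "int K \<le> 2 ^ nat (6 * Max S)" by (auto simp: K_def intro: power_increasing)
    also have "\<dots> \<le> (6 * Max S) * 2 ^ nat (6 * Max S)" using \<open>Max S \<ge> 1\<close> by simp
    finally show ?thesis using p by simp
  qed
  ultimately show ?thesis
    using code p periodic_with_periodic_set[of p T]
    by (intro exI[of _ "periodic_set p T"] exI[of _ p]) (auto intro: order_trans)
qed

end
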